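(* Let $F\in\mathbb C[x,y,s,t]$, and let $G\in\mathbb C[x,y]\setminus\mathbb C$ and $K\in\mathbb C[s,t]\setminus\mathbb C$ be squarefree. Then $Z(G)\times Z(K)\subset Z(F)$ if and only if $F$ is $(G,K)$-Cartesian.
   Context: $Z(\cdot)$ denotes the complex zero set; $Z(G)\subset\mathbb C^2$ in coordinates $(x,y)$, $Z(K)\subset\mathbb C^2$ in coordinates $(s,t)$, and $Z(F)\subset\mathbb C^4$. A polynomial is squarefree if it has no repeated irreducible factors. $F$ is $(G,K)$-Cartesian if $F=G(x,y)H(x,y,s,t)+K(s,t)L(x,y,s,t)$ for some $H,L\in\mathbb C[x,y,s,t]$. *)

theory Defs
  imports "HOL-Computational_Algebra.Computational_Algebra"
begin

text \<open>C[x,y] = (C[x])[y] : type complex poly poly, x innermost, y outermost.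
  C[s,t] = (C[s])[t] : type complex poly poly, s innermost, t outermost.
  C[x,y,s,t] = (((C[x])[y])[s])[t] : type complex poly poly poly poly.\<close>

type_synonym cpoly2 = "complex poly poly"
type_synonym cpoly4 = "complex poly poly poly poly"

definition eval2 :: "cpoly2 \<Rightarrow> complex \<Rightarrow> complex \<Rightarrow> complex" where
  "eval2 P a b = poly (poly P [:b:]) a"

definition eval4 :: "cpoly4 \<Rightarrow> complex \<Rightarrow> complex \<Rightarrow> complex \<Rightarrow> complex \<Rightarrow> complex" where
  "eval4 P x y s t = poly (poly (poly (poly P [:[:[:t:]:]:]) [:[:s:]:]) [:y:]) x"

definition is_const2 :: "cpoly2 \<Rightarrow> bool" where
  "is_const2 P \<longleftrightarrow> (\<exists>c. P = [:[:c:]:])"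

definition embed_xy :: "cpoly2 \<Rightarrow> cpoly4" where
  "embed_xy G = [:[:G:]:]"

definition embed_st :: "cpoly2 \<Rightarrow> cpoly4" where
  "embed_st K = map_poly (map_poly (\<lambda>c. [:[:c:]:])) K"

definition cartesian :: "cpoly2 \<Rightarrow> cpoly2 \<Rightarrow> cpoly4 \<Rightarrow> bool" where
  "cartesian G K F \<longleftrightarrow> (\<exists>H L. F = embed_xy G * H + embed_st K * L)"

end

theory Submission
  imports Defs "HOL-Computational_Algebra.Field_as_Ring"
begin

text \<open>Write \<open>F = \<Sum> r\<^sub>i(x,y) b\<^sub>i(s,t)\<close> and, by Gaussian elimination modulo \<open>K\<close>,
  rewrite it as \<open>K Q + \<Sum> a\<^sub>j(x,y) e\<^sub>j(s,t)\<close> with the \<open>e\<^sub>j\<close> linearly independent modulo \<open>K\<close>.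
  Fix a point of \<open>Z(G)\<close>: then \<open>\<Sum> a\<^sub>j(x,y) e\<^sub>j\<close> vanishes on \<open>Z(K)\<close>, so by the Nullstellensatz
  for the squarefree \<open>K\<close> it is divisible by \<open>K\<close>, and independence forces every \<open>a\<^sub>j(x,y) = 0\<close>.
  Hence each \<open>a\<^sub>j\<close> vanishes on \<open>Z(G)\<close>, and the Nullstellensatz for \<open>G\<close> gives \<open>G dvd a\<^sub>j\<close>.
  The Nullstellensatz for a prime \<open>p\<close> of \<open>\<complex>[s][t]\<close> of positive degree in \<open>t\<close> comes from an
  identity \<open>A p + B f = D(s)\<close> with \<open>D \<noteq> 0\<close> when \<open>p\<close> does not divide \<open>f\<close>: a zero of \<open>p\<close> with
  \<open>D(s) \<noteq> 0\<close> is then not a zero of \<open>f\<close>.\<close>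

lemma squarefree_dvdI:
  fixes n m :: "'a::factorial_semiring"
  assumes "squarefree n" and prime_dvd: "\<And>p. prime p \<Longrightarrow> p dvd n \<Longrightarrow> p dvd m"
  shows "n dvd m"
proof (cases "m = 0")
  case False
  have "n \<noteq> 0" using assms(1) by auto
  show ?thesis
  proof (rule multiplicity_le_imp_dvd[OF \<open>n \<noteq> 0\<close>])
    fix p :: 'a assume p: "prime p"
    have "multiplicity p n \<le> 1"
      using assms(1) \<open>n \<noteq> 0\<close> p squarefree_factorial_semiring'' by blast
    moreover have "0 < multiplicity p m" if "0 < multiplicity p n"
      using that p prime_dvd \<open>n \<noteq> 0\<close> False by (simp add: prime_multiplicity_gt_zero_iff)
    ultimately show "multiplicity p n \<le> multiplicity p m" by linarith
  qed
qed simp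

lemma least_degree_dvd_smult:
  fixes g q :: "'a::idom poly"
  assumes "g \<in> M" "g \<noteq> 0" "q \<in> M"
    and least: "\<And>h. h \<in> M \<Longrightarrow> h \<noteq> 0 \<Longrightarrow> degree g \<le> degree h"
    and closed: "\<And>u v a b. u \<in> M \<Longrightarrow> v \<in> M \<Longrightarrow> a * u + b * v \<in> M"
  shows "\<exists>c. c \<noteq> 0 \<and> g dvd smult c q"
proof -
  obtain d r where div: "pseudo_divmod q g = (d, r)" by (cases "pseudo_divmod q g") auto
  define c where "c = lead_coeff g ^ (Suc (degree q) - degree g)"
  have eq: "smult c q = g * d + r"
    using pseudo_divmod(1)[OF \<open>g \<noteq> 0\<close> div] by (simp add: c_def)
  have "r = [:c:] * q + (- d) * g" using eq by (simp add: algebra_simps)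
  moreover have "[:c:] * q + (- d) * g \<in> M" using closed[OF assms(3,1)] .
  ultimately have "r \<in> M" by simp
  then have "r = 0" using pseudo_divmod(2)[OF \<open>g \<noteq> 0\<close> div] least by fastforce
  moreover have "c \<noteq> 0" using \<open>g \<noteq> 0\<close> by (simp add: c_def)
  ultimately show ?thesis using eq by auto
qed

lemma prime_elem_not_dvd_imp_const_combination:
  fixes p f :: "'a::idom poly"
  assumes p: "prime_elem p" "degree p > 0" and "\<not> p dvd f"
  shows "\<exists>A B c. c \<noteq> 0 \<and> A * p + B * f = [:c:]"
proof -
  define M where "M = {A * p + B * f | A B. True}"
  have closed: "a * u + b * v \<in> M" if "u \<in> M" "v \<in> M" for u v a b
  proof -
    from that obtain A1 B1 A2 B2 where "u = A1 * p + B1 * f" "v = A2 * p + B2 * f"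
      unfolding M_def by blast
    then have "a * u + b * v = (a * A1 + b * A2) * p + (a * B1 + b * B2) * f"
      by (simp add: algebra_simps)
    then show ?thesis unfolding M_def by blast
  qed
  have "p = 1 * p + 0 * f" "f = 0 * p + 1 * f" by simp_all
  then have "p \<in> M" "f \<in> M" unfolding M_def by blast+
  have "p \<noteq> 0" using p by auto
  obtain g where g: "g \<in> M \<and> g \<noteq> 0"
    and least: "\<And>h. h \<in> M \<and> h \<noteq> 0 \<Longrightarrow> degree g \<le> degree h"
    using ex_has_least_nat[of "\<lambda>h. h \<in> M \<and> h \<noteq> 0" p degree] \<open>p \<in> M\<close> \<open>p \<noteq> 0\<close> by blast
  have dvd_smult: "\<exists>c. c \<noteq> 0 \<and> g dvd smult c q" if "q \<in> M" for q
    using least_degree_dvd_smult[of g M q] g least closed that by blast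
  show ?thesis
  proof (cases "degree g = 0")
    case True
    then have "A * p + B * f = [:coeff g 0:]" if "g = A * p + B * f" for A B
      using that degree_0_id[of g] by simp
    moreover have "coeff g 0 \<noteq> 0" using True g leading_coeff_0_iff by fastforce
    ultimately show ?thesis using g unfolding M_def by blast
  next
    case False
    obtain c1 d1 where "c1 \<noteq> 0" and d1: "smult c1 p = g * d1"
      using dvd_smult \<open>p \<in> M\<close> by blast
    have "\<not> p dvd d1"
    proof
      assume "p dvd d1"
      then obtain e where "d1 = p * e" ..
      with d1 have "[:c1:] * p = (g * e) * p" by (simp add: algebra_simps)
      then have "[:c1:] = g * e" using \<open>p \<noteq> 0\<close> mult_right_cancel by blast
      then have "g dvd [:c1:]" ..
      then have "degree g \<le> degree [:c1:]" using \<open>c1 \<noteq> 0\<close> by (intro dvd_imp_degree_le) auto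
      then show False using False by simp
    qed
    moreover have "p dvd g * d1"
    proof
      show "g * d1 = p * [:c1:]" using d1 by simp
    qed
    ultimately have "p dvd g" using p prime_elem_dvd_mult_iff by blast
    obtain c2 d2 where "c2 \<noteq> 0" and d2: "smult c2 f = g * d2"
      using dvd_smult \<open>f \<in> M\<close> by blast
    have "p dvd [:c2:] * f" using d2 \<open>p dvd g\<close> by simp
    moreover have "\<not> p dvd [:c2:]"
    proof
      assume "p dvd [:c2:]"
      then have "degree p \<le> degree [:c2:]" using \<open>c2 \<noteq> 0\<close> by (intro dvd_imp_degree_le) auto
      then show False using p(2) by simp
    qed
    ultimately show ?thesis using assms(3) p prime_elem_dvd_mult_iff by blast
  qed
qed

definition is_ring_hom :: "('a::comm_ring_1 \<Rightarrow> 'b::comm_ring_1) \<Rightarrow> bool" where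
  "is_ring_hom f \<longleftrightarrow> f 0 = 0 \<and> f 1 = 1 \<and> (\<forall>a b. f (a + b) = f a + f b) \<and> (\<forall>a b. f (a * b) = f a * f b)"

lemma is_ring_homD:
  assumes "is_ring_hom f"
  shows "f 0 = 0" "f 1 = 1" "f (a + b) = f a + f b" "f (a * b) = f a * f b"
  using assms by (auto simp: is_ring_hom_def)

lemma is_ring_hom_sum:
  assumes "is_ring_hom f"
  shows "f (sum g A) = (\<Sum>x\<in>A. f (g x))"
  by (induction A rule: infinite_finite_induct) (simp_all add: is_ring_homD[OF assms])

lemma map_poly_add_hom:
  assumes "is_ring_hom f"
  shows "map_poly f (p + q) = map_poly f p + map_poly f q"
  by (intro poly_eqI) (simp add: coeff_map_poly is_ring_homD[OF assms])

lemma map_poly_mult_hom: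
  assumes "is_ring_hom f"
  shows "map_poly f (p * q) = map_poly f p * map_poly f q"
proof (induction p)
  case (pCons a p)
  have "map_poly f (pCons a p * q) = map_poly f (smult a q) + map_poly f (pCons 0 (p * q))"
    by (simp add: map_poly_add_hom[OF assms])
  also have "\<dots> = map_poly f (pCons a p) * map_poly f q"
    by (simp add: map_poly_smult map_poly_pCons is_ring_homD[OF assms] pCons.IH)
  finally show ?case .
qed simp

lemma is_ring_hom_map_poly:
  assumes "is_ring_hom f"
  shows "is_ring_hom (map_poly f)"
  using assms by (simp add: is_ring_hom_def map_poly_add_hom map_poly_mult_hom)

lemma poly_map_poly_hom:
  assumes "is_ring_hom f"
  shows "poly (map_poly f p) (f a) = f (poly p a)"
  by (induction p) (simp_all add: map_poly_pCons is_ring_homD[OF assms])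

lemma is_ring_hom_const_const: "is_ring_hom (\<lambda>c. [:[:c:]:])"
  by (simp add: is_ring_hom_def one_pCons)

lemma is_ring_hom_embed_st: "is_ring_hom embed_st"
  unfolding embed_st_def by (intro is_ring_hom_map_poly is_ring_hom_const_const)

lemma embed_xy_mult [simp]: "embed_xy (a * b) = embed_xy a * embed_xy b"
  by (simp add: embed_xy_def)

lemmas embed_st_mult [simp] = is_ring_homD(4)[OF is_ring_hom_embed_st]
  and embed_st_sum [simp] = is_ring_hom_sum[OF is_ring_hom_embed_st]

lemma embed_xy_const: "embed_xy [:[:c:]:] = embed_st [:[:c:]:]"
  by (simp add: embed_xy_def embed_st_def map_poly_pCons)

lemma eval2_add [simp]: "eval2 (P + Q) a b = eval2 P a b + eval2 Q a b"
  and eval2_mult [simp]: "eval2 (P * Q) a b = eval2 P a b * eval2 Q a b"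
  and eval2_sum [simp]: "eval2 (sum f A) a b = (\<Sum>i\<in>A. eval2 (f i) a b)"
  and eval2_const [simp]: "eval2 [:[:c:]:] a b = c"
  by (simp_all add: eval2_def poly_sum)

lemma eval4_add [simp]: "eval4 (P + Q) x y s t = eval4 P x y s t + eval4 Q x y s t"
  and eval4_mult [simp]: "eval4 (P * Q) x y s t = eval4 P x y s t * eval4 Q x y s t"
  and eval4_sum [simp]: "eval4 (sum f A) x y s t = (\<Sum>i\<in>A. eval4 (f i) x y s t)"
  by (simp_all add: eval4_def poly_sum)

lemma eval4_embed_xy [simp]: "eval4 (embed_xy P) x y s t = eval2 P x y"
  by (simp add: eval4_def embed_xy_def eval2_def)

lemma eval4_embed_st [simp]: "eval4 (embed_st P) x y s t = eval2 P s t"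
proof -
  let ?c = "\<lambda>a::complex. [:[:a:]:] :: complex poly poly"
  note hom = is_ring_hom_const_const[where 'a = complex]
  have "poly (embed_st P) [:[:[:t:]:]:] = map_poly ?c (poly P [:t:])"
    using poly_map_poly_hom[OF is_ring_hom_map_poly[OF hom], of P "[:t:]"]
    by (simp add: embed_st_def map_poly_pCons)
  moreover have "poly (map_poly ?c q) [:[:s:]:] = [:[:poly q s:]:]" for q
    using poly_map_poly_hom[OF hom, of q s] by simp
  ultimately show ?thesis by (simp add: eval4_def eval2_def)
qed

lemma eval2_conv_map_poly: "eval2 P a b = poly (map_poly (\<lambda>c. poly c a) P) b"
  unfolding eval2_def by (induction P) (simp_all add: map_poly_pCons)

lemma eval2_zero_avoiding:
  fixes p :: cpoly2 and a :: "complex poly"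
  assumes "degree p > 0" and "a \<noteq> 0"
  shows "\<exists>s t. eval2 p s t = 0 \<and> poly a s \<noteq> 0"
proof -
  have "a * lead_coeff p \<noteq> 0" using assms by auto
  then obtain s where s: "poly (a * lead_coeff p) s \<noteq> 0"
    using poly_all_0_iff_0 by blast
  define ps where "ps = map_poly (\<lambda>c. poly c s) p"
  have "coeff ps (degree p) \<noteq> 0" using s by (simp add: ps_def coeff_map_poly)
  then have "degree ps \<noteq> 0" using assms(1) le_degree[of ps "degree p"] by linarith
  then obtain t where "poly ps t = 0"
    by (metis fundamental_theorem_of_algebra constant_degree)
  then have "eval2 p s t = 0" by (simp add: ps_def eval2_conv_map_poly)
  with s show ?thesis by auto
qed

lemma prime_elem_dvd_if_vanishing:
  fixes p f :: cpoly2
  assumes p: "prime_elem p" and vanish: "\<And>s t. eval2 p s t = 0 \<Longrightarrow> eval2 f s t = 0"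
  shows "p dvd f"
proof (cases "degree p = 0")
  case False
  show ?thesis
  proof (rule ccontr)
    assume "\<not> p dvd f"
    then obtain A B c where "c \<noteq> 0" and comb: "A * p + B * f = [:c:]"
      using prime_elem_not_dvd_imp_const_combination p False by blast
    then obtain s t where "eval2 p s t = 0" "poly c s \<noteq> 0"
      using eval2_zero_avoiding False by blast
    moreover have "eval2 (A * p + B * f) s t = poly c s"
      unfolding comb by (simp add: eval2_def)
    ultimately show False using vanish by simp
  qed
next
  case True
  \<comment> \<open>Then \<open>p\<close> is a prime of \<open>\<complex>[s]\<close>, essentially \<open>s - s\<^sub>0\<close>, and \<open>f\<close> vanishes on the line \<open>s = s\<^sub>0\<close>.\<close>
  define q where "q = coeff p 0"
  have p_eq: "p = [:q:]" using True by (simp add: q_def degree_0_id)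
  have "prime_elem q" using p by (simp add: p_eq prime_elem_const_poly_iff)
  then have "q \<noteq> 0" "\<not> is_unit q" by (auto simp: prime_elem_def)
  then obtain s where "poly q s = 0"
    using fundamental_theorem_of_algebra constant_degree is_unit_iff_degree by blast
  have "q dvd coeff f n" for n
  proof -
    have "q dvd [:-s, 1:]"
    proof -
      have "[:-s, 1:] dvd q" using \<open>poly q s = 0\<close> by (simp add: poly_eq_0_iff_dvd)
      moreover have "\<not> is_unit [:-s, 1:]" by (simp add: is_unit_iff_degree)
      ultimately show ?thesis
        using irreducibleD' prime_elem_imp_irreducible[OF \<open>prime_elem q\<close>] by blast
    qed
    moreover have "poly (map_poly (\<lambda>c. poly c s) f) t = 0" for t
      using vanish[of s t] \<open>poly q s = 0\<close> by (simp add: p_eq eval2_def eval2_conv_map_poly[symmetric])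
    then have "poly (coeff f n) s = 0"
      using poly_all_0_iff_0 by (metis coeff_0 coeff_map_poly poly_0)
    then have "[:-s, 1:] dvd coeff f n" by (simp add: poly_eq_0_iff_dvd)
    ultimately show ?thesis by (rule dvd_trans)
  qed
  then show ?thesis by (simp add: p_eq const_poly_dvd_iff)
qed

lemma squarefree_dvd_if_vanishing:
  fixes K f :: cpoly2
  assumes "squarefree K" and vanish: "\<And>s t. eval2 K s t = 0 \<Longrightarrow> eval2 f s t = 0"
  shows "K dvd f"
proof (rule squarefree_dvdI[OF assms(1)])
  fix p assume "prime p" "p dvd K"
  then obtain r where "K = p * r" by blast
  with vanish have "eval2 p s t = 0 \<Longrightarrow> eval2 f s t = 0" for s t by simp
  with \<open>prime p\<close> show "p dvd f" by (intro prime_elem_dvd_if_vanishing) auto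
qed

lemma embed_xy_mult_embed_st_monom:
  "embed_xy r * embed_st (monom (monom 1 i) j) = monom (monom r i) j"
  by (simp add: embed_xy_def embed_st_def map_poly_monom smult_monom pCons_one)

lemma cpoly4_as_sum_embed_xy_mult_embed_st:
  "\<exists>I r b. finite (I :: (nat \<times> nat) set) \<and> F = (\<Sum>k\<in>I. embed_xy (r k) * embed_st (b k))"
proof -
  define I where "I = Sigma {..degree F} (\<lambda>j. {..degree (coeff F j)})"
  have "F = (\<Sum>j\<le>degree F. monom (coeff F j) j)" by (simp add: poly_as_sum_of_monoms)
  also have "\<dots> = (\<Sum>j\<le>degree F. \<Sum>i\<le>degree (coeff F j). monom (monom (coeff (coeff F j) i) i) j)"
    by (intro sum.cong refl) (simp add: monom_sum[symmetric] poly_as_sum_of_monoms)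
  also have "\<dots> = (\<Sum>(j, i)\<in>I. embed_xy (coeff (coeff F j) i) * embed_st (monom (monom 1 i) j))"
    unfolding I_def embed_xy_mult_embed_st_monom by (rule sum.Sigma) auto
  finally show ?thesis unfolding I_def by (intro exI[of _ I]) (auto simp: I_def case_prod_beta)
qed

text \<open>Since \<open>[:[:c:]:]\<close> is the constant \<open>c\<close>, this is \<open>\<complex>\<close>-linear independence
  of the family \<open>e\<close> in \<open>\<complex>[s,t]/(K)\<close>.\<close>

definition independent_mod :: "cpoly2 \<Rightarrow> 'i set \<Rightarrow> ('i \<Rightarrow> cpoly2) \<Rightarrow> bool" where
  "independent_mod K J e \<longleftrightarrow> (\<forall>c. K dvd (\<Sum>j\<in>J. [:[:c j:]:] * e j) \<longrightarrow> (\<forall>j\<in>J. c j = 0))"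

lemma independent_modD:
  "independent_mod K J e \<Longrightarrow> K dvd (\<Sum>j\<in>J. [:[:c j:]:] * e j) \<Longrightarrow> j \<in> J \<Longrightarrow> c j = 0"
  unfolding independent_mod_def by blast

lemma sum_embed_xy_mult_embed_st_reduce:
  fixes b :: "'i \<Rightarrow> cpoly2"
  assumes "finite I"
  shows "\<exists>J a Q. J \<subseteq> I \<and> independent_mod K J b \<and>
    (\<Sum>i\<in>I. embed_xy (r i) * embed_st (b i)) = embed_st K * Q + (\<Sum>j\<in>J. embed_xy (a j) * embed_st (b j))"
  using assms
proof (induction I arbitrary: r rule: finite_psubset_induct)
  case (psubset I)
  show ?case
  proof (cases "independent_mod K I b")
    case True
    then show ?thesis by (intro exI[of _ I] exI[of _ r] exI[of _ 0]) simp
  next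
    case False
    then obtain c k h where "k \<in> I" "c k \<noteq> 0" and rel: "(\<Sum>i\<in>I. [:[:c i:]:] * b i) = K * h"
      unfolding independent_mod_def by blast
    define r' where "r' i = r i - r k * [:[:c i / c k:]:]" for i
    define u where "u = embed_xy (r k * [:[:1 / c k:]:])"
    have r': "embed_xy (r i) = embed_xy (r' i) + u * embed_xy [:[:c i:]:]" for i
      by (simp add: r'_def u_def embed_xy_def)
    have "(\<Sum>i\<in>I. embed_xy (r i) * embed_st (b i))
        = (\<Sum>i\<in>I. embed_xy (r' i) * embed_st (b i)) + u * (\<Sum>i\<in>I. embed_xy [:[:c i:]:] * embed_st (b i))"
      by (simp add: r' distrib_right sum.distrib sum_distrib_left mult.assoc)
    also have "(\<Sum>i\<in>I. embed_xy [:[:c i:]:] * embed_st (b i)) = embed_st K * embed_st h"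
      using arg_cong[OF rel, of embed_st] by (simp only: embed_st_sum embed_st_mult embed_xy_const)
    also have "(\<Sum>i\<in>I. embed_xy (r' i) * embed_st (b i)) = (\<Sum>i\<in>I - {k}. embed_xy (r' i) * embed_st (b i))"
      using \<open>k \<in> I\<close> \<open>c k \<noteq> 0\<close> psubset.hyps(1)
      by (intro sum.mono_neutral_right) (auto simp: r'_def embed_xy_def pCons_one)
    finally have split: "(\<Sum>i\<in>I. embed_xy (r i) * embed_st (b i))
        = (\<Sum>i\<in>I - {k}. embed_xy (r' i) * embed_st (b i)) + u * (embed_st K * embed_st h)" .
    obtain J a Q where "J \<subseteq> I - {k}" "independent_mod K J b"
      and IH: "(\<Sum>i\<in>I - {k}. embed_xy (r' i) * embed_st (b i)) = embed_st K * Q + (\<Sum>j\<in>J. embed_xy (a j) * embed_st (b j))"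
      using psubset.IH[of "I - {k}" r'] \<open>k \<in> I\<close> by blast
    have "(\<Sum>i\<in>I. embed_xy (r i) * embed_st (b i)) = embed_st K * (Q + u * embed_st h) + (\<Sum>j\<in>J. embed_xy (a j) * embed_st (b j))"
      unfolding split IH by (simp add: algebra_simps)
    with \<open>J \<subseteq> I - {k}\<close> \<open>independent_mod K J b\<close> show ?thesis by blast
  qed
qed

lemma dvd_coefficients_if_vanishing:
  assumes "squarefree G" "squarefree K" "independent_mod K J e" "j \<in> J"
    and vanish: "\<And>x y s t. eval2 G x y = 0 \<Longrightarrow> eval2 K s t = 0 \<Longrightarrow>
      eval4 (embed_st K * Q + (\<Sum>j\<in>J. embed_xy (a j) * embed_st (e j))) x y s t = 0"
  shows "G dvd a j"
proof (rule squarefree_dvd_if_vanishing[OF assms(1)])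
  fix x y assume "eval2 G x y = 0"
  have "K dvd (\<Sum>j\<in>J. [:[:eval2 (a j) x y:]:] * e j)"
  proof (rule squarefree_dvd_if_vanishing[OF assms(2)])
    fix s t assume "eval2 K s t = 0"
    have "eval2 (\<Sum>j\<in>J. [:[:eval2 (a j) x y:]:] * e j) s t = (\<Sum>j\<in>J. eval2 (a j) x y * eval2 (e j) s t)"
      by (simp only: eval2_sum eval2_mult eval2_const)
    with vanish[OF \<open>eval2 G x y = 0\<close> \<open>eval2 K s t = 0\<close>] \<open>eval2 K s t = 0\<close>
    show "eval2 (\<Sum>j\<in>J. [:[:eval2 (a j) x y:]:] * e j) s t = 0" by simp
  qed
  from independent_modD[OF assms(3) this assms(4)] show "eval2 (a j) x y = 0" .
qed

theorem theorem2p2: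
  fixes F :: cpoly4 and G K :: cpoly2
  assumes "\<not> is_const2 G" and "\<not> is_const2 K"
    and "squarefree G" and "squarefree K"
  shows "(\<forall>x y s t. eval2 G x y = 0 \<and> eval2 K s t = 0 \<longrightarrow> eval4 F x y s t = 0)
         \<longleftrightarrow> cartesian G K F"
proof
  assume vanish: "\<forall>x y s t. eval2 G x y = 0 \<and> eval2 K s t = 0 \<longrightarrow> eval4 F x y s t = 0"
  obtain I :: "(nat \<times> nat) set" and r b where "finite I"
    and F_sum: "F = (\<Sum>i\<in>I. embed_xy (r i) * embed_st (b i))"
    using cpoly4_as_sum_embed_xy_mult_embed_st by blast
  obtain J a Q where "independent_mod K J b"
    and F: "F = embed_st K * Q + (\<Sum>j\<in>J. embed_xy (a j) * embed_st (b j))"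
    using sum_embed_xy_mult_embed_st_reduce[OF \<open>finite I\<close>, where K = K and r = r and b = b]
    unfolding F_sum[symmetric] by blast
  have "\<forall>j\<in>J. G dvd a j"
    using dvd_coefficients_if_vanishing[OF assms(3,4) \<open>independent_mod K J b\<close>] vanish
    unfolding F by blast
  then obtain a' where a': "\<forall>j\<in>J. a j = G * a' j" unfolding dvd_def by (metis bchoice)
  have "F = embed_xy G * (\<Sum>j\<in>J. embed_xy (a' j) * embed_st (b j)) + embed_st K * Q"
    unfolding F sum_distrib_left using a' by (simp add: mult.assoc)
  then show "cartesian G K F" unfolding cartesian_def by blast
next
  assume "cartesian G K F"
  then show "\<forall>x y s t. eval2 G x y = 0 \<and> eval2 K s t = 0 \<longrightarrow> eval4 F x y s t = 0"
    by (auto simp: cartesian_def)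
qed

end
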